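(* Let $U$ be a solution curve of the normalized two-dimensional capillarity equation, i.e. a $C^2$ function $U(\xi)$ on an open interval with inclination angle $\psi=\arctan U_\xi\in(-\pi/2,\pi/2)$, satisfying $(\sin\psi)_\xi=U$, $U_\xi=\tan\psi$, and let $c$ be the constant with $\tfrac12U^2+\cos\psi\equiv c$ along the curve. Suppose $c>1$ and set $\delta=c-1$. Then: (i) the length $l$ of any $\xi$-interval over which the solution curve (as a graph with $-\pi/2<\psi<\pi/2$) can extend satisfies $l<\sqrt{2/\delta}$; (ii) any such solution curve that is positive at some point can be extended (as a graph, with $-\pi/2<\psi<\pi/2$) across a unique point at which it attains a positive minimum value $U_0$; (iii) if each such positive solution curve (with $c>1$), maximally extended as a graph over the parameter interval $-\pi/2<\psi<\pi/2$, is translated horizontally so that its minimum point lies at $\xi=0$, then the set of all these normalized curves simply covers a domain $\mathcal{D}^+$ (the union of their graphs), i.e. each point of $\mathcal{D}^+$ lies on exactly one of the normalized curves.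
   Context: The capillarity equation in one variable, in non-dimensional coordinates $\xi=\sqrt{\kappa}x$, $U=\sqrt{\kappa}u$ ($\kappa>0$ the capillarity constant), reads $(\sin\psi)_\xi=U$, $U_\xi=\tan\psi$, where $\psi$ is the inclination angle of the graph $U(\xi)$. Every solution satisfies the first integral $\tfrac12U^2+\cos\psi=c$ for a constant $c$. "Solution curve" here means a graph $U(\xi)$ solving this system with $-\pi/2<\psi<\pi/2$. *)

theory Defs
  imports "HOL-Analysis.Analysis"
begin

definition incl :: "(real \<Rightarrow> real) \<Rightarrow> real \<Rightarrow> real" where
  "incl U x = arctan (deriv U x)"

text \<open>U is a solution curve of the normalized capillarity equation
  (sin psi)' = U, U' = tan psi on the nonempty open interval I,
  with -pi/2 < psi < pi/2 (automatic since psi = arctan U'),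
  and U is C^2 on I.\<close>
definition cap_sol :: "(real \<Rightarrow> real) \<Rightarrow> real set \<Rightarrow> bool" where
  "cap_sol U I \<longleftrightarrow> is_interval I \<and> open I \<and> I \<noteq> {} \<and>
     (\<forall>x\<in>I. (U has_real_derivative tan (incl U x)) (at x)) \<and>
     (\<forall>x\<in>I. ((\<lambda>t. sin (incl U t)) has_real_derivative U x) (at x)) \<and>
     (\<forall>x\<in>I. deriv U differentiable (at x)) \<and>
     continuous_on I (deriv (deriv U))"

definition cap_energy :: "(real \<Rightarrow> real) \<Rightarrow> real set \<Rightarrow> real \<Rightarrow> bool" where
  "cap_energy U I c \<longleftrightarrow> (\<forall>x\<in>I. (U x)\<^sup>2 / 2 + cos (incl U x) = c)"

definition cap_ext :: "(real \<Rightarrow> real) \<Rightarrow> real set \<Rightarrow> (real \<Rightarrow> real) \<Rightarrow> real set \<Rightarrow> bool" where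
  "cap_ext U I V J \<longleftrightarrow> cap_sol V J \<and> I \<subseteq> J \<and> (\<forall>x\<in>I. V x = U x)"

definition cap_maximal :: "(real \<Rightarrow> real) \<Rightarrow> real set \<Rightarrow> bool" where
  "cap_maximal U I \<longleftrightarrow> cap_sol U I \<and> (\<forall>W K. cap_ext U I W K \<longrightarrow> K = I)"

definition graph_on :: "(real \<Rightarrow> real) \<Rightarrow> real set \<Rightarrow> (real \<times> real) set" where
  "graph_on U I = {(x, U x) | x. x \<in> I}"

definition normalized_curves :: "(real \<times> real) set set" where
  "normalized_curves = {graph_on V J | V J. \<exists>c. c > 1 \<and> cap_maximal V J \<and>
      cap_energy V J c \<and> (\<forall>x\<in>J. V x > 0) \<and> 0 \<in> J \<and> (\<forall>x\<in>J. V 0 \<le> V x)}"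

definition D_plus :: "(real \<times> real) set" where
  "D_plus = \<Union> normalized_curves"

end

theory Submission
  imports Defs
begin

text \<open>For \<open>c > 1\<close> the first integral gives \<open>U\<^sup>2 = 2 (c - cos \<psi>) \<ge> 2 (c - 1) > 0\<close>, so \<open>U\<close> has
  constant sign and the inclination \<open>\<psi>\<close> is strictly monotone along the curve; it can serve as
  parameter, with \<open>d\<xi>/d\<psi> = cos \<psi> / U = \<plusminus>cos \<psi> / sqrt (2 (c - cos \<psi>))\<close>. Hence every solution is,
  up to translation and the reflection \<open>\<xi> \<mapsto> -\<xi>\<close>, a piece of one explicit curve over
  \<open>\<psi> \<in> (-\<pi>/2, \<pi>/2)\<close>. Its width \<open>\<integral> cos \<psi> / sqrt (2 (c - cos \<psi>)) d\<psi>\<close> is less than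
  \<open>\<integral> cos \<psi> / sqrt (2 (c - 1)) d\<psi> = sqrt (2 / (c - 1))\<close>, and its height \<open>sqrt (2 (c - cos \<psi>))\<close> is
  minimal exactly at \<open>\<psi> = 0\<close>. Normalized curves with \<open>c\<^sub>1 < c\<^sub>2\<close> cannot meet: at a common height
  the larger \<open>c\<close> needs a smaller \<open>|\<psi>|\<close>, and since \<open>d\<xi>/d\<psi>\<close> decreases in \<open>c\<close>, the \<open>c\<^sub>2\<close>-curve
  reaches that height at a smaller \<open>|\<xi>|\<close>.\<close>

lemma increment_le_of_deriv_le:
  fixes F G :: "real \<Rightarrow> real"
  assumes "a \<le> b" "continuous_on {a..b} F" "continuous_on {a..b} G"
    and "\<And>x. a < x \<Longrightarrow> x < b \<Longrightarrow> (F has_real_derivative F' x) (at x)"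
    and "\<And>x. a < x \<Longrightarrow> x < b \<Longrightarrow> (G has_real_derivative G' x) (at x)"
    and "\<And>x. a < x \<Longrightarrow> x < b \<Longrightarrow> F' x \<le> G' x"
  shows "F b - F a \<le> G b - G a"
proof -
  have "G a - F a \<le> G b - F b"
  proof (rule DERIV_nonneg_imp_increasing_open[OF \<open>a \<le> b\<close>, of "\<lambda>x. G x - F x"])
    fix x assume x: "a < x" "x < b"
    show "\<exists>y. ((\<lambda>x. G x - F x) has_real_derivative y) (at x) \<and> 0 \<le> y"
      using assms(4-6)[OF x] by (intro exI[of _ "G' x - F' x"]) (auto intro: DERIV_diff)
  qed (use assms in \<open>auto intro: continuous_on_diff\<close>)
  then show ?thesis by simp
qed

lemma increment_less_of_deriv_less:
  fixes F G :: "real \<Rightarrow> real"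
  assumes "a < b" "continuous_on {a..b} F" "continuous_on {a..b} G"
    and "\<And>x. a < x \<Longrightarrow> x < b \<Longrightarrow> (F has_real_derivative F' x) (at x)"
    and "\<And>x. a < x \<Longrightarrow> x < b \<Longrightarrow> (G has_real_derivative G' x) (at x)"
    and "\<And>x. a < x \<Longrightarrow> x < b \<Longrightarrow> F' x < G' x"
  shows "F b - F a < G b - G a"
proof -
  have "G a - F a < G b - F b"
  proof (rule DERIV_pos_imp_increasing_open[OF \<open>a < b\<close>, of "\<lambda>x. G x - F x"])
    fix x assume x: "a < x" "x < b"
    show "\<exists>y. ((\<lambda>x. G x - F x) has_real_derivative y) (at x) \<and> 0 < y"
      using assms(4-6)[OF x] by (intro exI[of _ "G' x - F' x"]) (auto intro: DERIV_diff)
  qed (use assms in \<open>auto intro: continuous_on_diff\<close>)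
  then show ?thesis by simp
qed

text \<open>\<open>xi_at c\<close> is the abscissa, as a function of the inclination, of the positive solution with
  energy \<open>c\<close> whose minimum lies at \<open>\<xi> = 0\<close>; \<open>psi_at c\<close> is its inverse and \<open>cap_curve c a\<close> that
  solution translated by \<open>-a\<close>.\<close>

definition dxi_dpsi :: "real \<Rightarrow> real \<Rightarrow> real" where
  "dxi_dpsi c t = cos t / sqrt (2 * (c - cos t))"

definition xi_at :: "real \<Rightarrow> real \<Rightarrow> real" where
  "xi_at c p = integral {-pi..p} (dxi_dpsi c) - integral {-pi..0} (dxi_dpsi c)"

definition xi_range :: "real \<Rightarrow> real set" where
  "xi_range c = {xi_at c (-(pi/2))<..<xi_at c (pi/2)}"

definition psi_at :: "real \<Rightarrow> real \<Rightarrow> real" where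
  "psi_at c = inv_into {-(pi/2)<..<pi/2} (xi_at c)"

definition cap_curve :: "real \<Rightarrow> real \<Rightarrow> real \<Rightarrow> real" where
  "cap_curve c a x = sqrt (2 * (c - cos (psi_at c (x + a))))"

definition cap_interval :: "real \<Rightarrow> real \<Rightarrow> real set" where
  "cap_interval c a = {xi_at c (-(pi/2)) - a<..<xi_at c (pi/2) - a}"

lemma diff_cos_pos: "1 < c \<Longrightarrow> 0 < c - cos (t::real)"
  using cos_le_one[of t] by linarith

lemma continuous_on_dxi_dpsi: "1 < c \<Longrightarrow> continuous_on S (dxi_dpsi c)"
  unfolding dxi_dpsi_def by (intro continuous_intros) (use diff_cos_pos in force)+

lemma dxi_dpsi_pos: "1 < c \<Longrightarrow> -(pi/2) < t \<Longrightarrow> t < pi/2 \<Longrightarrow> 0 < dxi_dpsi c t"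
  unfolding dxi_dpsi_def using diff_cos_pos[of c t] cos_gt_zero_pi[of t] by auto

lemma dxi_dpsi_antimono:
  assumes "1 < c1" "c1 \<le> c2" "0 \<le> cos t"
  shows "dxi_dpsi c2 t \<le> dxi_dpsi c1 t"
  unfolding dxi_dpsi_def using assms diff_cos_pos[of c1 t]
  by (intro divide_left_mono mult_pos_pos) auto

lemma dxi_dpsi_le:
  assumes "1 < c" "0 \<le> cos t"
  shows "dxi_dpsi c t \<le> cos t / sqrt (2 * (c - 1))"
  unfolding dxi_dpsi_def using assms cos_le_one[of t] diff_cos_pos[of c t]
  by (intro divide_left_mono mult_pos_pos) auto

lemma dxi_dpsi_less:
  assumes "1 < c" "0 < cos t" "cos t < 1"
  shows "dxi_dpsi c t < cos t / sqrt (2 * (c - 1))"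
  unfolding dxi_dpsi_def using assms
  by (intro divide_strict_left_mono mult_pos_pos) auto

lemma has_real_derivative_xi_at:
  assumes "1 < c" "-pi < p"
  shows "(xi_at c has_real_derivative dxi_dpsi c p) (at p)"
proof -
  have "((\<lambda>q. integral {-pi..q} (dxi_dpsi c)) has_real_derivative dxi_dpsi c p)
          (at p within {-pi..p+1})"
    by (rule integral_has_real_derivative) (use assms continuous_on_dxi_dpsi in auto)
  moreover have "at p within {-pi..p+1} = at p"
    by (rule at_within_interior) (use assms in auto)
  ultimately show ?thesis
    unfolding xi_at_def[abs_def] by (auto intro!: derivative_eq_intros)
qed

lemma xi_at_0 [simp]: "xi_at c 0 = 0"
  by (simp add: xi_at_def)

lemma continuous_on_xi_at:
  assumes "1 < c" "S \<subseteq> {-(pi/2)..}"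
  shows "continuous_on S (xi_at c)"
proof (intro continuous_at_imp_continuous_on ballI)
  fix p assume "p \<in> S"
  then have "-(pi/2) \<le> p" using assms(2) by auto
  then have "-pi < p" using pi_gt_zero by linarith
  then show "isCont (xi_at c) p"
    using DERIV_isCont has_real_derivative_xi_at assms(1) by blast
qed

lemma strict_mono_on_xi_at: "1 < c \<Longrightarrow> strict_mono_on {-(pi/2)..pi/2} (xi_at c)"
proof (rule strict_mono_onI)
  fix p q assume c: "1 < c" and pq: "p \<in> {-(pi/2)..pi/2}" "q \<in> {-(pi/2)..pi/2}" "p < q"
  show "xi_at c p < xi_at c q"
  proof (rule DERIV_pos_imp_increasing_open[OF \<open>p < q\<close>])
    show "continuous_on {p..q} (xi_at c)" using c pq by (intro continuous_on_xi_at) auto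
    fix x assume "p < x" "x < q"
    then show "\<exists>y. (xi_at c has_real_derivative y) (at x) \<and> 0 < y"
      using c pq pi_gt_zero
      by (intro exI[of _ "dxi_dpsi c x"] conjI has_real_derivative_xi_at dxi_dpsi_pos) auto
  qed
qed

lemma xi_at_image: "1 < c \<Longrightarrow> xi_at c ` {-(pi/2)<..<pi/2} = xi_range c"
proof
  assume c: "1 < c"
  note mono = strict_mono_on_less[OF strict_mono_on_xi_at[OF c]]
  show "xi_at c ` {-(pi/2)<..<pi/2} \<subseteq> xi_range c"
    using mono by (auto simp: xi_range_def)
  show "xi_range c \<subseteq> xi_at c ` {-(pi/2)<..<pi/2}"
  proof
    fix z assume z: "z \<in> xi_range c"
    obtain p where p: "-(pi/2) \<le> p" "p \<le> pi/2" "xi_at c p = z"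
      using IVT'[of "xi_at c" "-(pi/2)" z "pi/2"] z c continuous_on_xi_at[OF c]
      by (auto simp: xi_range_def)
    moreover have "p \<noteq> -(pi/2)" "p \<noteq> pi/2"
      using p(3) z unfolding xi_range_def by (metis greaterThanLessThan_iff less_irrefl)+
    ultimately show "z \<in> xi_at c ` {-(pi/2)<..<pi/2}" by auto
  qed
qed

lemma inj_on_xi_at: "1 < c \<Longrightarrow> inj_on (xi_at c) {-(pi/2)<..<pi/2}"
  by (rule strict_mono_on_imp_inj_on, rule monotone_on_subset[OF strict_mono_on_xi_at]) auto

lemma psi_at_xi_at: "1 < c \<Longrightarrow> -(pi/2) < p \<Longrightarrow> p < pi/2 \<Longrightarrow> psi_at c (xi_at c p) = p"
  unfolding psi_at_def by (rule inv_into_f_f) (auto intro: inj_on_xi_at)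

lemma
  assumes "1 < c" "z \<in> xi_range c"
  shows psi_at_gt: "-(pi/2) < psi_at c z"
    and psi_at_less: "psi_at c z < pi/2"
    and xi_at_psi_at: "xi_at c (psi_at c z) = z"
proof -
  have z: "z \<in> xi_at c ` {-(pi/2)<..<pi/2}"
    using assms xi_at_image by blast
  show "-(pi/2) < psi_at c z" "psi_at c z < pi/2"
    using inv_into_into[OF z] by (auto simp: psi_at_def)
  show "xi_at c (psi_at c z) = z"
    using f_inv_into_f[OF z] by (simp add: psi_at_def)
qed

lemma isCont_psi_at:
  assumes c: "1 < c" and z: "z \<in> xi_range c"
  shows "isCont (psi_at c) z"
proof -
  define p where "p = psi_at c z"
  have p: "-(pi/2) < p" "p < pi/2"
    using psi_at_gt[OF c z] psi_at_less[OF c z] by (auto simp: p_def)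
  have "isCont (psi_at c) (xi_at c p)"
  proof (rule isCont_inverse_function2[of "(p - pi/2) / 2" p "(p + pi/2) / 2"])
    fix q assume "(p - pi/2) / 2 \<le> q" "q \<le> (p + pi/2) / 2"
    then show "psi_at c (xi_at c q) = q" "isCont (xi_at c) q"
      using p c pi_gt_zero
      by (auto intro!: psi_at_xi_at DERIV_isCont[OF has_real_derivative_xi_at])
  qed (use p in auto)
  then show ?thesis using xi_at_psi_at[OF c z] by (simp add: p_def)
qed

lemma has_real_derivative_psi_at:
  assumes c: "1 < c" and z: "z \<in> xi_range c"
  shows "(psi_at c has_real_derivative inverse (dxi_dpsi c (psi_at c z))) (at z)"
proof (rule DERIV_inverse_function[where a = "xi_at c (-(pi/2))" and b = "xi_at c (pi/2)"])
  show "(xi_at c has_real_derivative dxi_dpsi c (psi_at c z)) (at (psi_at c z))"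
    using psi_at_gt[OF c z] pi_gt_zero by (intro has_real_derivative_xi_at c) linarith
  show "dxi_dpsi c (psi_at c z) \<noteq> 0"
    using dxi_dpsi_pos[OF c psi_at_gt[OF c z] psi_at_less[OF c z]] by simp
  show "xi_at c (-(pi/2)) < z" "z < xi_at c (pi/2)"
    using z by (auto simp: xi_range_def)
  show "isCont (psi_at c) z" by (rule isCont_psi_at[OF c z])
qed (use c xi_at_psi_at in \<open>auto simp: xi_range_def\<close>)

lemma mem_cap_interval: "x \<in> cap_interval c a \<longleftrightarrow> x + a \<in> xi_range c"
  by (auto simp: cap_interval_def xi_range_def)

lemma open_cap_interval: "open (cap_interval c a)"
  by (simp add: cap_interval_def)

lemma has_real_derivative_psi_at_shift:
  assumes "1 < c" "x \<in> cap_interval c a"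
  shows "((\<lambda>x. psi_at c (x + a)) has_real_derivative inverse (dxi_dpsi c (psi_at c (x + a)))) (at x)"
  using DERIV_chain2[OF has_real_derivative_psi_at DERIV_add[OF DERIV_ident DERIV_const]] assms
  by (simp add: mem_cap_interval)

lemma has_real_derivative_cap_curve:
  assumes c: "1 < c" and x: "x \<in> cap_interval c a"
  shows "(cap_curve c a has_real_derivative tan (psi_at c (x + a))) (at x)"
proof -
  define t where "t = psi_at c (x + a)"
  have t: "-(pi/2) < t" "t < pi/2"
    using psi_at_gt psi_at_less c x by (auto simp: t_def mem_cap_interval)
  have pos: "0 < 2 * (c - cos t)" using diff_cos_pos[OF c] by simp
  have "((\<lambda>x. cos (psi_at c (x + a))) has_real_derivative - sin t * inverse (dxi_dpsi c t)) (at x)"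
    using DERIV_chain2[OF DERIV_cos has_real_derivative_psi_at_shift[OF c x]] by (simp add: t_def)
  then have "((\<lambda>x. 2 * (c - cos (psi_at c (x + a)))) has_real_derivative
               2 * (0 - - sin t * inverse (dxi_dpsi c t))) (at x)"
    by (intro DERIV_cmult DERIV_diff DERIV_const)
  then have "(cap_curve c a has_real_derivative
               inverse (sqrt (2 * (c - cos t))) / 2 * (2 * (0 - - sin t * inverse (dxi_dpsi c t)))) (at x)"
    using pos unfolding cap_curve_def[abs_def] t_def
    by (rule DERIV_chain2[OF DERIV_real_sqrt, rotated])
  moreover have "inverse (sqrt (2 * (c - cos t))) / 2 * (2 * (0 - - sin t * inverse (dxi_dpsi c t))) = tan t"
    using pos cos_gt_zero_pi[OF t] by (simp add: dxi_dpsi_def tan_def field_simps)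
  ultimately show ?thesis by (simp add: t_def)
qed

lemma incl_cap_curve: "1 < c \<Longrightarrow> x \<in> cap_interval c a \<Longrightarrow> incl (cap_curve c a) x = psi_at c (x + a)"
  unfolding incl_def using psi_at_gt psi_at_less
  by (simp add: DERIV_imp_deriv[OF has_real_derivative_cap_curve] arctan_tan mem_cap_interval)

lemma has_real_derivative_deriv_cap_curve:
  assumes c: "1 < c" and x: "x \<in> cap_interval c a"
  shows "(deriv (cap_curve c a) has_real_derivative
            inverse ((cos (psi_at c (x + a)))\<^sup>2 * dxi_dpsi c (psi_at c (x + a)))) (at x)"
proof -
  have "cos (psi_at c (x + a)) \<noteq> 0"
    using cos_gt_zero_pi psi_at_gt psi_at_less c x by (force simp: mem_cap_interval)
  then have "((\<lambda>x. tan (psi_at c (x + a))) has_real_derivative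
            inverse ((cos (psi_at c (x + a)))\<^sup>2 * dxi_dpsi c (psi_at c (x + a)))) (at x)"
    using DERIV_chain2[OF DERIV_tan has_real_derivative_psi_at_shift[OF c x]]
    by (simp add: field_simps)
  then show ?thesis
    by (rule has_field_derivative_transform_within_open[OF _ open_cap_interval x])
       (simp add: DERIV_imp_deriv[OF has_real_derivative_cap_curve[OF c]])
qed

lemma cap_sol_cap_curve:
  assumes c: "1 < c"
  shows "cap_sol (cap_curve c a) (cap_interval c a)"
  unfolding cap_sol_def
proof (intro conjI ballI open_cap_interval)
  show "is_interval (cap_interval c a)"
    by (simp add: cap_interval_def is_interval_convex_1)
  show "cap_interval c a \<noteq> {}"
    using strict_mono_on_less[OF strict_mono_on_xi_at[OF c], of "-(pi/2)" "pi/2"]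
    by (simp add: cap_interval_def)
  fix x assume x: "x \<in> cap_interval c a"
  define t where "t = psi_at c (x + a)"
  have t: "-(pi/2) < t" "t < pi/2"
    using psi_at_gt psi_at_less c x by (auto simp: t_def mem_cap_interval)
  show "(cap_curve c a has_real_derivative tan (incl (cap_curve c a) x)) (at x)"
    using has_real_derivative_cap_curve[OF c x] incl_cap_curve[OF c x] by simp
  have "((\<lambda>x. sin (psi_at c (x + a))) has_real_derivative cos t * inverse (dxi_dpsi c t)) (at x)"
    using DERIV_chain2[OF DERIV_sin has_real_derivative_psi_at_shift[OF c x]] by (simp add: t_def)
  moreover have "cos t * inverse (dxi_dpsi c t) = cap_curve c a x"
    using cos_gt_zero_pi[OF t] diff_cos_pos[OF c, of t]
    by (simp add: dxi_dpsi_def cap_curve_def t_def)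
  ultimately have "((\<lambda>x. sin (psi_at c (x + a))) has_real_derivative cap_curve c a x) (at x)"
    by simp
  then show "((\<lambda>x. sin (incl (cap_curve c a) x)) has_real_derivative cap_curve c a x) (at x)"
    by (rule has_field_derivative_transform_within_open[OF _ open_cap_interval x])
       (simp add: incl_cap_curve[OF c])
  show "deriv (cap_curve c a) differentiable at x"
    using has_real_derivative_deriv_cap_curve[OF c x] real_differentiable_def by blast
next
  have "continuous_on (cap_interval c a)
          (\<lambda>x. inverse ((cos (psi_at c (x + a)))\<^sup>2 * dxi_dpsi c (psi_at c (x + a))))"
  proof (intro continuous_at_imp_continuous_on ballI)
    fix x assume x: "x \<in> cap_interval c a"
    define t where "t = psi_at c (x + a)"
    have t: "-(pi/2) < t" "t < pi/2"
      using psi_at_gt psi_at_less c x by (auto simp: t_def mem_cap_interval)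
    have "isCont (dxi_dpsi c) t"
      using continuous_on_dxi_dpsi[OF c, of UNIV] by (simp add: continuous_on_eq_continuous_at)
    then have "isCont (\<lambda>p. inverse ((cos p)\<^sup>2 * dxi_dpsi c p)) t"
      using cos_gt_zero_pi[OF t] dxi_dpsi_pos[OF c t] by (intro continuous_intros) auto
    then show "isCont (\<lambda>x. inverse ((cos (psi_at c (x + a)))\<^sup>2 * dxi_dpsi c (psi_at c (x + a)))) x"
      using isCont_o2[OF DERIV_isCont[OF has_real_derivative_psi_at_shift[OF c x]]]
      by (simp add: t_def)
  qed
  then show "continuous_on (cap_interval c a) (deriv (deriv (cap_curve c a)))"
    by (rule continuous_on_eq)
       (simp add: DERIV_imp_deriv[OF has_real_derivative_deriv_cap_curve[OF c]])
qed

lemma cap_energy_cap_curve: "1 < c \<Longrightarrow> cap_energy (cap_curve c a) (cap_interval c a) c"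
  unfolding cap_energy_def
proof
  fix x assume "1 < c" "x \<in> cap_interval c a"
  moreover have "0 \<le> 2 * (c - cos (psi_at c (x + a)))"
    using diff_cos_pos[OF \<open>1 < c\<close>, of "psi_at c (x + a)"] by simp
  ultimately show "(cap_curve c a x)\<^sup>2 / 2 + cos (incl (cap_curve c a) x) = c"
    by (simp add: incl_cap_curve cap_curve_def field_simps)
qed

lemma incl_gt: "-(pi/2) < incl U x" and incl_less: "incl U x < pi/2"
  unfolding incl_def using arctan_lbound arctan_ubound by auto

lemma cap_energy_sq: "cap_energy U I c \<Longrightarrow> x \<in> I \<Longrightarrow> (U x)\<^sup>2 = 2 * (c - cos (incl U x))"
  unfolding cap_energy_def by (simp add: field_simps)

lemma cap_energy_nonzero: "cap_energy U I c \<Longrightarrow> 1 < c \<Longrightarrow> x \<in> I \<Longrightarrow> U x \<noteq> 0"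
  using cap_energy_sq diff_cos_pos by fastforce

lemma cap_sol_sign:
  assumes sol: "cap_sol U I" and en: "cap_energy U I c" and c: "1 < c"
  shows "(\<forall>x\<in>I. 0 < U x) \<or> (\<forall>x\<in>I. U x < 0)"
proof (rule ccontr)
  assume "\<not> ?thesis"
  then obtain x y where xy: "x \<in> I" "y \<in> I" "U x \<le> 0" "0 \<le> U y"
    by (meson not_less)
  have "continuous_on I U"
    using sol unfolding cap_sol_def by (meson DERIV_isCont continuous_at_imp_continuous_on)
  moreover have "connected I"
    using sol by (simp add: cap_sol_def is_interval_connected)
  ultimately have "is_interval (U ` I)"
    by (simp add: connected_continuous_image is_interval_connected_1)
  then have "0 \<in> U ` I"
    using xy unfolding is_interval_1 by blast
  then show False
    using cap_energy_nonzero[OF en c] by auto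
qed

lemma cap_sol_incl_derivative:
  assumes sol: "cap_sol U I" and x: "x \<in> I"
  obtains p' where "(incl U has_real_derivative p') (at x)" "cos (incl U x) * p' = U x"
proof -
  obtain D where "(deriv U has_real_derivative D) (at x)"
    using sol x unfolding cap_sol_def real_differentiable_def by blast
  then have dp: "(incl U has_real_derivative inverse (1 + (deriv U x)\<^sup>2) * D) (at x)"
    unfolding incl_def[abs_def] by (rule DERIV_chain2[OF DERIV_arctan])
  have "((\<lambda>t. sin (incl U t)) has_real_derivative cos (incl U x) * (inverse (1 + (deriv U x)\<^sup>2) * D)) (at x)"
    by (rule DERIV_chain2[OF DERIV_sin dp])
  moreover have "((\<lambda>t. sin (incl U t)) has_real_derivative U x) (at x)"
    using sol x unfolding cap_sol_def by blast
  ultimately show ?thesis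
    using that dp DERIV_unique by blast
qed

lemma has_real_derivative_xi_at_incl:
  assumes sol: "cap_sol U I" and en: "cap_energy U I c" and c: "1 < c" and x: "x \<in> I"
  shows "((\<lambda>t. xi_at c (incl U t)) has_real_derivative sgn (U x)) (at x)"
proof -
  obtain p' where dp: "(incl U has_real_derivative p') (at x)" and e: "cos (incl U x) * p' = U x"
    using cap_sol_incl_derivative[OF sol x] .
  have "(xi_at c has_real_derivative dxi_dpsi c (incl U x)) (at (incl U x))"
    using incl_gt[of U x] pi_gt_zero by (intro has_real_derivative_xi_at c) linarith
  from DERIV_chain2[OF this dp]
  have D: "((\<lambda>t. xi_at c (incl U t)) has_real_derivative dxi_dpsi c (incl U x) * p') (at x)" .
  have "sqrt (2 * (c - cos (incl U x))) = \<bar>U x\<bar>"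
    using cap_energy_sq[OF en x] by (metis real_sqrt_abs)
  then have "dxi_dpsi c (incl U x) * p' = U x / \<bar>U x\<bar>"
    using e by (simp add: dxi_dpsi_def)
  also have "\<dots> = sgn (U x)"
    using cap_energy_nonzero[OF en c x] by (auto simp: sgn_if abs_if)
  finally show ?thesis using D by simp
qed

lemma xi_at_incl_affine:
  assumes sol: "cap_sol U I" and en: "cap_energy U I c" and c: "1 < c"
    and sgn: "\<And>x. x \<in> I \<Longrightarrow> sgn (U x) = s"
  obtains a where "\<And>x. x \<in> I \<Longrightarrow> xi_at c (incl U x) = s * x + a"
proof -
  have "((\<lambda>t. xi_at c (incl U t) - s * t) has_real_derivative 0) (at x within I)" if x: "x \<in> I" for x
  proof -
    have "((\<lambda>t. xi_at c (incl U t) - s * t) has_real_derivative sgn (U x) - s * 1) (at x)"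
      by (intro DERIV_diff has_real_derivative_xi_at_incl[OF sol en c x] DERIV_cmult DERIV_ident)
    then have "((\<lambda>t. xi_at c (incl U t) - s * t) has_real_derivative 0) (at x)"
      using sgn[OF x] by simp
    then show ?thesis by (rule has_field_derivative_at_within)
  qed
  moreover have "convex I"
    using sol by (simp add: cap_sol_def is_interval_convex)
  ultimately obtain a where a: "\<forall>x\<in>I. xi_at c (incl U x) - s * x = a"
    using has_field_derivative_zero_constant by blast
  show ?thesis
  proof (rule that)
    fix x assume "x \<in> I"
    then show "xi_at c (incl U x) = s * x + a" using a by fastforce
  qed
qed

lemma xi_at_incl_mem_xi_range: "1 < c \<Longrightarrow> xi_at c (incl U x) \<in> xi_range c"
  using strict_mono_on_less[OF strict_mono_on_xi_at] incl_gt[of U x] incl_less[of U x]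
  by (simp add: xi_range_def)

lemma xi_range_width: "1 < c \<Longrightarrow> xi_at c (pi/2) - xi_at c (-(pi/2)) < sqrt (2 / (c - 1))"
proof -
  assume c: "1 < c"
  define k where "k = sqrt (2 * (c - 1))"
  have k: "0 < k" using c by (simp add: k_def)
  have xi_cont: "continuous_on {u..v} (xi_at c)" if "-(pi/2) \<le> u" for u v
    using c that by (intro continuous_on_xi_at) auto
  have sin_cont: "continuous_on {u..v} (\<lambda>t. sin t / k)" for u v
    by (intro continuous_intros) (use k in auto)
  have xi_deriv: "(xi_at c has_real_derivative dxi_dpsi c t) (at t)" if "-(pi/2) < t" for t
    using that pi_gt_zero by (intro has_real_derivative_xi_at c) linarith
  have sin_deriv: "((\<lambda>t. sin t / k) has_real_derivative cos t / k) (at t)" for t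
    by (intro DERIV_cdivide DERIV_sin)
  have "xi_at c 0 - xi_at c (-(pi/2)) \<le> sin 0 / k - sin (-(pi/2)) / k"
  proof (rule increment_le_of_deriv_le[where F' = "dxi_dpsi c" and G' = "\<lambda>t. cos t / k"])
    fix t assume "-(pi/2) < t" "t < 0"
    then show "dxi_dpsi c t \<le> cos t / k"
      unfolding k_def by (intro dxi_dpsi_le c cos_ge_zero) auto
  qed (auto intro!: xi_cont sin_cont xi_deriv sin_deriv)
  moreover have "xi_at c (pi/2) - xi_at c 0 < sin (pi/2) / k - sin 0 / k"
  proof (rule increment_less_of_deriv_less[where F' = "dxi_dpsi c" and G' = "\<lambda>t. cos t / k"])
    fix t assume t: "0 < t" "t < pi/2"
    have "cos t < cos 0" using t by (intro cos_monotone_0_pi) auto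
    then show "dxi_dpsi c t < cos t / k"
      unfolding k_def using t by (intro dxi_dpsi_less c cos_gt_zero_pi) auto
  qed (auto intro!: xi_cont sin_cont xi_deriv sin_deriv)
  moreover have "sqrt (2 / (c - 1)) = 2 / k"
  proof (rule real_sqrt_unique)
    show "(2 / k)\<^sup>2 = 2 / (c - 1)"
      using c by (simp add: k_def power_divide field_simps)
  qed (use k in simp)
  ultimately show ?thesis by simp
qed

lemma cap_sol_width:
  assumes sol: "cap_sol U I" and en: "cap_energy U I c" and c: "1 < c"
  shows "bounded I \<and> Sup I - Inf I < sqrt (2 / (c - 1))"
proof -
  obtain s where s: "\<bar>s\<bar> = 1" "\<And>x. x \<in> I \<Longrightarrow> sgn (U x) = s"
    using cap_sol_sign[OF sol en c] by (metis abs_neg_one abs_one sgn_neg sgn_pos)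
  obtain a where a: "\<And>x. x \<in> I \<Longrightarrow> xi_at c (incl U x) = s * x + a"
    using xi_at_incl_affine[OF sol en c s(2)] by blast
  define L where "L = xi_at c (pi/2) - xi_at c (-(pi/2))"
  have dist: "\<bar>x - y\<bar> < L" if "x \<in> I" "y \<in> I" for x y
  proof -
    have "s * x + a \<in> xi_range c" "s * y + a \<in> xi_range c"
      using xi_at_incl_mem_xi_range[OF c, of U] a that by metis+
    then have "\<bar>(s * x + a) - (s * y + a)\<bar> < L"
      by (auto simp: L_def xi_range_def abs_less_iff)
    moreover have "(s * x + a) - (s * y + a) = s * (x - y)"
      by (simp add: algebra_simps)
    ultimately show ?thesis
      using s(1) by (simp add: abs_mult)
  qed
  obtain x0 where x0: "x0 \<in> I"
    using sol unfolding cap_sol_def by blast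
  have "bounded I"
    unfolding bounded_real using dist[OF _ x0] by (intro exI[of _ "\<bar>x0\<bar> + L"]) force
  moreover have "Sup I \<le> Inf I + L"
  proof (rule cSup_least)
    fix x assume x: "x \<in> I"
    have "x - L \<le> Inf I"
      using dist[OF x] x0 by (intro cInf_greatest) force+
    then show "x \<le> Inf I + L" by simp
  qed (use x0 in auto)
  ultimately show ?thesis
    using xi_range_width[OF c] by (simp add: L_def)
qed

lemma cap_sol_extends_to_cap_curve:
  assumes sol: "cap_sol U I" and en: "cap_energy U I c" and c: "1 < c" and pos: "\<forall>x\<in>I. 0 < U x"
  obtains a where "cap_ext U I (cap_curve c a) (cap_interval c a)"
proof -
  obtain a where a: "\<And>x. x \<in> I \<Longrightarrow> xi_at c (incl U x) = 1 * x + a"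
    by (rule xi_at_incl_affine[OF sol en c, of 1]) (use pos in auto)
  have "cap_ext U I (cap_curve c a) (cap_interval c a)"
    unfolding cap_ext_def
  proof (intro conjI ballI subsetI cap_sol_cap_curve c)
    fix x assume x: "x \<in> I"
    show "x \<in> cap_interval c a"
      using a[OF x] xi_at_incl_mem_xi_range[OF c, of U x] by (simp add: mem_cap_interval)
    have "psi_at c (x + a) = incl U x"
      using a[OF x] psi_at_xi_at[OF c incl_gt[of U x] incl_less[of U x]] by simp
    then have "cap_curve c a x = sqrt ((U x)\<^sup>2)"
      using cap_energy_sq[OF en x] by (simp add: cap_curve_def)
    then show "cap_curve c a x = U x"
      using pos x by (simp add: abs_of_pos)
  qed
  then show ?thesis ..
qed

lemma cap_curve_ge: "1 < c \<Longrightarrow> sqrt (2 * (c - 1)) \<le> cap_curve c a x"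
  by (simp add: cap_curve_def)

lemma neg_mem_cap_interval:
  assumes "1 < c"
  shows "-a \<in> cap_interval c a"
proof -
  note mono = strict_mono_on_less[OF strict_mono_on_xi_at[OF assms]]
  have "xi_at c (-(pi/2)) < xi_at c 0" "xi_at c 0 < xi_at c (pi/2)"
    using mono[of "-(pi/2)" 0] mono[of 0 "pi/2"] by simp_all
  then show ?thesis by (simp add: cap_interval_def)
qed

lemma cap_curve_eq_min_iff:
  assumes c: "1 < c" and x: "x \<in> cap_interval c a"
  shows "cap_curve c a x = sqrt (2 * (c - 1)) \<longleftrightarrow> x = -a"
proof
  assume "x = -a"
  then show "cap_curve c a x = sqrt (2 * (c - 1))"
    using psi_at_xi_at[OF c, of 0] by (simp add: cap_curve_def)
next
  let ?t = "psi_at c (x + a)"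
  assume "cap_curve c a x = sqrt (2 * (c - 1))"
  then have "cos \<bar>?t\<bar> = cos 0"
    using diff_cos_pos[OF c] by (simp add: cap_curve_def)
  moreover have "\<bar>?t\<bar> < pi/2"
    using psi_at_gt psi_at_less c x by (force simp: mem_cap_interval)
  ultimately have "?t = 0"
    using cos_mono_less_eq[of "\<bar>?t\<bar>" 0] cos_mono_less_eq[of 0 "\<bar>?t\<bar>"] by force
  then show "x = -a"
    using xi_at_psi_at[OF c, of "x + a"] x by (simp add: mem_cap_interval)
qed

lemma cap_curve_argmin_iff:
  assumes c: "1 < c" and x: "x \<in> cap_interval c a"
  shows "(\<forall>y\<in>cap_interval c a. cap_curve c a x \<le> cap_curve c a y) \<longleftrightarrow> x = -a"
  using cap_curve_eq_min_iff[OF c] cap_curve_ge[OF c] neg_mem_cap_interval[OF c] x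
  by (metis order.antisym)

lemma cap_sol_extends_with_unique_min:
  assumes sol: "cap_sol U I" and en: "cap_energy U I c" and c: "1 < c" and ex: "\<exists>x\<in>I. 0 < U x"
  shows "\<exists>V J. cap_ext U I V J \<and> cap_energy V J c \<and>
           (\<exists>!m. m \<in> J \<and> (\<forall>x\<in>J. V m \<le> V x)) \<and>
           (\<forall>m\<in>J. (\<forall>x\<in>J. V m \<le> V x) \<longrightarrow> 0 < V m)"
proof -
  have "\<forall>x\<in>I. 0 < U x"
    using cap_sol_sign[OF sol en c] ex by force
  then obtain a where "cap_ext U I (cap_curve c a) (cap_interval c a)"
    using cap_sol_extends_to_cap_curve[OF sol en c] by blast
  moreover have "\<exists>!m. m \<in> cap_interval c a \<and> (\<forall>x\<in>cap_interval c a. cap_curve c a m \<le> cap_curve c a x)"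
    using cap_curve_argmin_iff[OF c] neg_mem_cap_interval[OF c] by blast
  moreover have "0 < cap_curve c a m" for m
    using diff_cos_pos[OF c] by (simp add: cap_curve_def)
  ultimately show ?thesis
    using cap_energy_cap_curve[OF c] by blast
qed

lemma normalized_curves_eq:
  assumes "G \<in> normalized_curves"
  obtains c where "1 < c" "G = graph_on (cap_curve c 0) (cap_interval c 0)"
proof -
  obtain V J c where G: "G = graph_on V J" and c: "1 < c" and max: "cap_maximal V J"
    and en: "cap_energy V J c" and pos: "\<forall>x\<in>J. 0 < V x" and min: "0 \<in> J" "\<forall>x\<in>J. V 0 \<le> V x"
    using assms unfolding normalized_curves_def by blast
  have sol: "cap_sol V J"
    using max by (simp add: cap_maximal_def)
  obtain a where ext: "cap_ext V J (cap_curve c a) (cap_interval c a)"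
    using cap_sol_extends_to_cap_curve[OF sol en c pos] by blast
  then have J: "J = cap_interval c a" and V: "\<forall>x\<in>J. cap_curve c a x = V x"
    using max unfolding cap_maximal_def cap_ext_def by blast+
  have "a = 0"
    using cap_curve_argmin_iff[OF c, of 0 a] min J V by simp
  then have "G = graph_on (cap_curve c 0) (cap_interval c 0)"
    using G J V by (auto simp: graph_on_def)
  then show ?thesis using c that by blast
qed

lemma xi_at_increment_antimono:
  assumes c: "1 < c1" "c1 \<le> c2" and uv: "-(pi/2) \<le> u" "u \<le> v" "v \<le> pi/2"
  shows "xi_at c2 v - xi_at c2 u \<le> xi_at c1 v - xi_at c1 u"
proof (rule increment_le_of_deriv_le[where F' = "dxi_dpsi c2" and G' = "dxi_dpsi c1"])
  have "1 < c2" using c by simp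
  then show "continuous_on {u..v} (xi_at c2)" "continuous_on {u..v} (xi_at c1)"
    using c uv by (auto intro!: continuous_on_xi_at)
  fix t assume t: "u < t" "t < v"
  have "-pi < t" using uv t pi_gt_zero by linarith
  then show "(xi_at c2 has_real_derivative dxi_dpsi c2 t) (at t)"
    "(xi_at c1 has_real_derivative dxi_dpsi c1 t) (at t)"
    using c \<open>1 < c2\<close> by (simp_all add: has_real_derivative_xi_at)
  show "dxi_dpsi c2 t \<le> dxi_dpsi c1 t"
    using c uv t by (intro dxi_dpsi_antimono cos_ge_zero) auto
qed (use uv in simp)

lemma cap_curve_graphs_disjoint:
  assumes c1: "1 < c1" and c12: "c1 < c2"
  shows "graph_on (cap_curve c1 0) (cap_interval c1 0) \<inter> graph_on (cap_curve c2 0) (cap_interval c2 0) = {}"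
proof (rule ccontr)
  assume "\<not> ?thesis"
  then obtain x where x1: "x \<in> cap_interval c1 0" and x2: "x \<in> cap_interval c2 0"
    and y: "cap_curve c1 0 x = cap_curve c2 0 x"
    by (auto simp: graph_on_def)
  have c2: "1 < c2" using c1 c12 by simp
  define t1 t2 where "t1 = psi_at c1 x" and "t2 = psi_at c2 x"
  have t1: "-(pi/2) < t1" "t1 < pi/2" "xi_at c1 t1 = x"
    using psi_at_gt psi_at_less xi_at_psi_at c1 x1 by (auto simp: t1_def mem_cap_interval)
  have t2: "-(pi/2) < t2" "t2 < pi/2" "xi_at c2 t2 = x"
    using psi_at_gt psi_at_less xi_at_psi_at c2 x2 by (auto simp: t2_def mem_cap_interval)
  have "c1 - cos t1 = c2 - cos t2"
    using y diff_cos_pos c1 c2 by (simp add: cap_curve_def t1_def t2_def)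
  then have cos: "cos t1 < cos t2" using c12 by simp
  note mono1 = strict_mono_on_less[OF strict_mono_on_xi_at[OF c1]]
    and mono2 = strict_mono_on_less_eq[OF strict_mono_on_xi_at[OF c2]]
  show False
  proof (cases "0 \<le> t1")
    case True
    then have "0 \<le> t2"
      using mono2[of 0 t2] mono1[of t1 0] t1 t2 by auto
    then have "t2 < t1"
      using cos cos_mono_less_eq[of t1 t2] True t1 t2 by simp
    then have "xi_at c1 t2 < x"
      using mono1[of t2 t1] t1 t2 by auto
    moreover have "x \<le> xi_at c1 t2"
      using xi_at_increment_antimono[OF c1 less_imp_le[OF c12], of 0 t2] \<open>0 \<le> t2\<close> t2 by simp
    ultimately show False by simp
  next
    case False
    then have "t2 < 0"
      using mono2[of 0 t2] mono1[of t1 0] t1 t2 by auto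
    then have "t1 < t2"
      using cos cos_mono_less_eq[of "-t1" "-t2"] False t1 t2 by simp
    then have "x < xi_at c1 t2"
      using mono1[of t1 t2] t1 t2 by auto
    moreover have "xi_at c1 t2 \<le> x"
      using xi_at_increment_antimono[OF c1 less_imp_le[OF c12], of t2 0] \<open>t2 < 0\<close> t2 by simp
    ultimately show False by simp
  qed
qed

lemma normalized_curves_unique:
  assumes "p \<in> D_plus"
  shows "\<exists>!G. G \<in> normalized_curves \<and> p \<in> G"
proof -
  obtain G where G: "G \<in> normalized_curves" "p \<in> G"
    using assms unfolding D_plus_def by blast
  moreover have "G' = G" if G': "G' \<in> normalized_curves" "p \<in> G'" for G'
  proof -
    obtain c where c: "1 < c" "G = graph_on (cap_curve c 0) (cap_interval c 0)"
      using normalized_curves_eq[OF G(1)] by blast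
    obtain c' where c': "1 < c'" "G' = graph_on (cap_curve c' 0) (cap_interval c' 0)"
      using normalized_curves_eq[OF G'(1)] by blast
    have "\<not> c < c'" "\<not> c' < c"
      using cap_curve_graphs_disjoint[OF c(1)] cap_curve_graphs_disjoint[OF c'(1)] G G' c c'
      by blast+
    then show ?thesis using c c' by simp
  qed
  ultimately show ?thesis by blast
qed

theorem theorem1:
  shows "(\<forall>U I c. cap_sol U I \<and> cap_energy U I c \<and> c > 1 \<longrightarrow>
            bounded I \<and> Sup I - Inf I < sqrt (2 / (c - 1)))
       \<and> (\<forall>U I c. cap_sol U I \<and> cap_energy U I c \<and> c > 1 \<and> (\<exists>x\<in>I. U x > 0) \<longrightarrow>
            (\<exists>V J. cap_ext U I V J \<and> cap_energy V J c \<and>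
               (\<exists>!m. m \<in> J \<and> (\<forall>x\<in>J. V m \<le> V x)) \<and>
               (\<forall>m\<in>J. (\<forall>x\<in>J. V m \<le> V x) \<longrightarrow> V m > 0)))
       \<and> (\<forall>p\<in>D_plus. \<exists>!G. G \<in> normalized_curves \<and> p \<in> G)"
proof (intro conjI allI impI ballI)
  fix U I c
  assume "cap_sol U I \<and> cap_energy U I c \<and> c > 1"
  then show "bounded I" "Sup I - Inf I < sqrt (2 / (c - 1))"
    using cap_sol_width by blast+
next
  fix U I c
  assume "cap_sol U I \<and> cap_energy U I c \<and> c > 1 \<and> (\<exists>x\<in>I. U x > 0)"
  then show "\<exists>V J. cap_ext U I V J \<and> cap_energy V J c \<and>
               (\<exists>!m. m \<in> J \<and> (\<forall>x\<in>J. V m \<le> V x)) \<and>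
               (\<forall>m\<in>J. (\<forall>x\<in>J. V m \<le> V x) \<longrightarrow> V m > 0)"
    by (elim conjE) (rule cap_sol_extends_with_unique_min)
qed (rule normalized_curves_unique)

end
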